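(* For the Diverse Population-Based EA on the weighted vertex cover problem with $n$ vertices, a solution $x$ with the two properties (1) $LP(x)=LP(0^n)-Cost(x)$ and (2) there is an optimal solution of the LP for $G(x)$ which assigns $1/2$ to each non-isolated vertex of $G(x)$, is included in the population in expected time $O(n^3)$.
   Context: Weighted vertex cover: $G=(V,E)$, $V=\{v_1,\dots,v_n\}$, $w:V\to\mathbb{N}^+$. Search points $x\in\{0,1\}^n$ ($v_i$ selected iff $x_i=1$); $|x|_1$ is the number of ones. $Cost(x)=\sum_i w(v_i)x_i$; $G(x)=(V(x),E(x))$ with $V(x)=V\setminus\{v_i:x_i=1\}$, $E(x)$ = edges with no selected endpoint. The LP for $G(x)$: minimize $\sum_{v_i\in V(x)}w(v_i)y_i$ s.t. $y_i+y_j\ge1$ for $\{v_i,v_j\}\in E(x)$, $0\le y_i\le1$; $LP(x)$ is its optimal value. Alternative mutation operator on $x$: choose $b\in\{0,1\}$ uniformly; if $b=1$, flip each $x_i$ with probability $1/2$ if $v_i$ is incident to an edge of $E(x)$ and with probability $1/n$ otherwise; if $b=0$, flip each bit independently with probability $1/n$. Diverse Population-Based EA: start with uniformly random $x$, $P=\{x\}$. Each iteration: choose $x\in P$ uniformly; create $x'$ by the alternative mutation operator; add $x'$ to $P$; let $P'=\{y\in P:|y|_1=|x'|_1\}$; let $y_{min_1}\in P'$ minimize $Cost(z)+LP(z)$ and $y_{min_2}\in P'$ minimize $Cost(z)+2LP(z)$ over $P'$; set $P\leftarrow(P\setminus P')\cup\{y_{min_1},y_{min_2}\}$. Time = number of iterations.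 *)

theory Defs
  imports "HOL-Probability.Probability"
begin

text \<open>Vertices are 0..n-1; vertex v_(i+1) of the paper is i here.
  A search point x in {0,1}^n is represented by the set of selected vertices
  (a subset of {..<n}); |x|_1 = card x and 0^n = {}.\<close>

definition wf_graph :: "nat \<Rightarrow> nat set set \<Rightarrow> bool" where
  "wf_graph n E \<longleftrightarrow> (\<forall>e\<in>E. \<exists>i j. i < n \<and> j < n \<and> i \<noteq> j \<and> e = {i, j})"

definition cost :: "(nat \<Rightarrow> nat) \<Rightarrow> nat set \<Rightarrow> real" where
  "cost w x = (\<Sum>i\<in>x. real (w i))"

definition Vx :: "nat \<Rightarrow> nat set \<Rightarrow> nat set" where
  "Vx n x = {..<n} - x"

definition Ex :: "nat set set \<Rightarrow> nat set \<Rightarrow> nat set set" where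
  "Ex E x = {e\<in>E. e \<inter> x = {}}"

definition incident :: "nat set set \<Rightarrow> nat set \<Rightarrow> nat \<Rightarrow> bool" where
  "incident E x i \<longleftrightarrow> (\<exists>e\<in>Ex E x. i \<in> e)"

definition lp_feasible :: "nat \<Rightarrow> nat set set \<Rightarrow> nat set \<Rightarrow> (nat \<Rightarrow> real) \<Rightarrow> bool" where
  "lp_feasible n E x y \<longleftrightarrow>
     (\<forall>i\<in>Vx n x. 0 \<le> y i \<and> y i \<le> 1) \<and>
     (\<forall>e\<in>Ex E x. \<forall>i j. e = {i, j} \<longrightarrow> y i + y j \<ge> 1)"

definition lp_obj :: "nat \<Rightarrow> (nat \<Rightarrow> nat) \<Rightarrow> nat set \<Rightarrow> (nat \<Rightarrow> real) \<Rightarrow> real" where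
  "lp_obj n w x y = (\<Sum>i\<in>Vx n x. real (w i) * y i)"

definition LP :: "nat \<Rightarrow> nat set set \<Rightarrow> (nat \<Rightarrow> nat) \<Rightarrow> nat set \<Rightarrow> real" where
  "LP n E w x = Inf {lp_obj n w x y | y. lp_feasible n E x y}"

definition target :: "nat \<Rightarrow> nat set set \<Rightarrow> (nat \<Rightarrow> nat) \<Rightarrow> nat set \<Rightarrow> bool" where
  "target n E w x \<longleftrightarrow> x \<subseteq> {..<n} \<and>
     LP n E w x = LP n E w {} - cost w x \<and>
     (\<exists>y. lp_feasible n E x y \<and> lp_obj n w x y = LP n E w x \<and>
          (\<forall>i\<in>Vx n x. incident E x i \<longrightarrow> y i = 1/2))"

definition flip_bits :: "nat \<Rightarrow> (nat \<Rightarrow> real) \<Rightarrow> nat set \<Rightarrow> nat set pmf" where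
  "flip_bits n p x = map_pmf (\<lambda>f. let F = {i. f i} in (x - F) \<union> (F - x))
                         (Pi_pmf {..<n} False (\<lambda>i. bernoulli_pmf (p i)))"

definition alt_mutation :: "nat \<Rightarrow> nat set set \<Rightarrow> nat set \<Rightarrow> nat set pmf" where
  "alt_mutation n E x = do {
     b \<leftarrow> bernoulli_pmf (1/2);
     if b then flip_bits n (\<lambda>i. if incident E x i then 1/2 else 1 / real n) x
     else flip_bits n (\<lambda>i. 1 / real n) x }"

definition valid_sel :: "(nat set set \<Rightarrow> (nat set \<Rightarrow> real) \<Rightarrow> nat set) \<Rightarrow> bool" where
  "valid_sel sel \<longleftrightarrow> (\<forall>S f. finite S \<and> S \<noteq> {} \<longrightarrow>
      sel S f \<in> S \<and> (\<forall>z\<in>S. f (sel S f) \<le> f z))"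

definition update :: "nat \<Rightarrow> nat set set \<Rightarrow> (nat \<Rightarrow> nat) \<Rightarrow>
    (nat set set \<Rightarrow> (nat set \<Rightarrow> real) \<Rightarrow> nat set) \<Rightarrow> nat set set \<Rightarrow> nat set \<Rightarrow> nat set set" where
  "update n E w sel P x' =
     (let P1 = insert x' P;
          P' = {y\<in>P1. card y = card x'};
          y1 = sel P' (\<lambda>z. cost w z + LP n E w z);
          y2 = sel P' (\<lambda>z. cost w z + 2 * LP n E w z)
      in (P1 - P') \<union> {y1, y2})"

definition ea_step :: "nat \<Rightarrow> nat set set \<Rightarrow> (nat \<Rightarrow> nat) \<Rightarrow>
    (nat set set \<Rightarrow> (nat set \<Rightarrow> real) \<Rightarrow> nat set) \<Rightarrow> nat set set \<Rightarrow> nat set set pmf" where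
  "ea_step n E w sel P = do {
     x \<leftarrow> pmf_of_set P;
     x' \<leftarrow> alt_mutation n E x;
     return_pmf (update n E w sel P x') }"

definition hit :: "nat \<Rightarrow> nat set set \<Rightarrow> (nat \<Rightarrow> nat) \<Rightarrow> nat set set \<Rightarrow> bool" where
  "hit n E w P \<longleftrightarrow> (\<exists>x\<in>P. target n E w x)"

primrec stopped_pop :: "nat \<Rightarrow> nat set set \<Rightarrow> (nat \<Rightarrow> nat) \<Rightarrow>
    (nat set set \<Rightarrow> (nat set \<Rightarrow> real) \<Rightarrow> nat set) \<Rightarrow> nat \<Rightarrow> nat set set pmf" where
  "stopped_pop n E w sel 0 = map_pmf (\<lambda>x. {x}) (pmf_of_set (Pow {..<n}))"
| "stopped_pop n E w sel (Suc t) = stopped_pop n E w sel t \<bind>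
     (\<lambda>P. if hit n E w P then return_pmf P else ea_step n E w sel P)"

text \<open>Expected hitting time  E[T] = sum_{t>=0} Pr[T > t].\<close>
definition expected_hitting_time :: "nat \<Rightarrow> nat set set \<Rightarrow> (nat \<Rightarrow> nat) \<Rightarrow>
    (nat set set \<Rightarrow> (nat set \<Rightarrow> real) \<Rightarrow> nat set) \<Rightarrow> ennreal" where
  "expected_hitting_time n E w sel =
     (\<Sum>t. emeasure (measure_pmf (stopped_pop n E w sel t)) {P. \<not> hit n E w P})"

end

theory Submission
  imports Defs
begin

text \<open>Call a search point x tight if Cost(x) + LP(x) = LP(0^n); this is property (1), and 0^n
  is tight. If a tight x is not a target, take an optimal LP solution z of G(x) that vanishes on
  isolated vertices and move along the line from the all-1/2 solution h through z: the objective
  does not increase beyond z, so the point where the first coordinate reaches 0 or 1 is still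
  optimal, and a coordinate 0 forces a 1 at a neighbour. An optimal LP solution with value 1 at
  v \<notin> x shows that x \<union> {v} is tight again.

  The potential of a population is n - (least size in P) while P contains no tight point, and
  n + 1 + (largest size of a tight point in P) afterwards. Selection keeps, for each size, a
  minimiser of Cost + LP, and tight points are exactly the points attaining the lower bound
  LP(0^n) of Cost + LP; so the potential never decreases. While no target is found, flipping a
  single bit of a suitable parent raises it, which happens with probability at least
  1/(24 n^2) because the population has at most 2(n+1) members. The potential takes at most
  2n+2 values, so the expected time is at most 24 n^2 (2n+2) \<le> 96 n^3.\<close>

lemma wf_graph_edge:
  "wf_graph n E \<Longrightarrow> e \<in> E \<Longrightarrow> \<exists>i j. i < n \<and> j < n \<and> i \<noteq> j \<and> e = {i, j}"
  unfolding wf_graph_def by auto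

lemma incident_if_edge: "e \<in> Ex E x \<Longrightarrow> e = {i, j} \<Longrightarrow> incident E x i \<and> incident E x j"
  by (auto simp: incident_def)

lemma card_le_if_subset_lessThan: "x \<subseteq> {..<n} \<Longrightarrow> card x \<le> n"
  using card_mono[OF finite_lessThan, of x n] by simp

lemma finite_Vx: "finite (Vx n x)"
  by (simp add: Vx_def)

lemma lp_feasible_const_1: "lp_feasible n E x (\<lambda>_. 1)"
  by (auto simp: lp_feasible_def)

lemma lp_obj_nonneg: "lp_feasible n E x y \<Longrightarrow> 0 \<le> lp_obj n w x y"
  unfolding lp_feasible_def lp_obj_def by (auto intro!: sum_nonneg)

lemma LP_le_lp_obj: "lp_feasible n E x y \<Longrightarrow> LP n E w x \<le> lp_obj n w x y"
  unfolding LP_def by (rule cInf_lower) (auto intro!: bdd_belowI[where m=0] lp_obj_nonneg)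

lemma LP_greatest: "(\<And>y. lp_feasible n E x y \<Longrightarrow> c \<le> lp_obj n w x y) \<Longrightarrow> c \<le> LP n E w x"
  unfolding LP_def by (rule cInf_greatest) (use lp_feasible_const_1[of n E x] in auto)

text \<open>The feasible region restricted to [0,1]^\<nat> is compact in the product topology; values
  outside V(x) do not matter and are set to 1.\<close>
lemma LP_attained: "\<exists>y. lp_feasible n E x y \<and> lp_obj n w x y = LP n E w x"
proof -
  define S where "S = Pi UNIV (\<lambda>_. {0..1::real}) \<inter>
    {y. \<forall>e i j. e \<in> Ex E x \<and> e = {i, j} \<longrightarrow> 1 \<le> y i + y j}"
  have "compactin (product_topology (\<lambda>i. euclidean) UNIV) (PiE UNIV (\<lambda>_::nat. {0..1::real}))"
    by (subst compactin_PiE) auto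
  then have "compact (Pi UNIV (\<lambda>_::nat. {0..1::real}))"
    by (simp add: euclidean_product_topology PiE_UNIV_domain)
  moreover have "closed {y::nat\<Rightarrow>real. \<forall>e i j. e \<in> Ex E x \<and> e = {i, j} \<longrightarrow> 1 \<le> y i + y j}"
    by (intro closed_Collect_all closed_Collect_imp closed_Collect_le continuous_intros) auto
  ultimately have "compact S"
    unfolding S_def by (rule compact_Int_closed)
  have feasible_S: "lp_feasible n E x y" if "y \<in> S" for y
    using that unfolding S_def lp_feasible_def by (auto simp: Pi_def)
  have "(\<lambda>_. 1) \<in> S"
    unfolding S_def by auto
  moreover have "continuous_on S (lp_obj n w x)"
    unfolding lp_obj_def
    by (intro continuous_intros continuous_on_product_then_coordinatewise continuous_on_id)
  ultimately obtain y where "y \<in> S" and y_min: "\<And>z. z \<in> S \<Longrightarrow> lp_obj n w x y \<le> lp_obj n w x z"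
    using continuous_attains_inf[OF \<open>compact S\<close>] by blast
  have "lp_obj n w x y \<le> LP n E w x"
  proof (rule LP_greatest)
    fix z assume z: "lp_feasible n E x z"
    define z' where "z' = (\<lambda>i. if i \<in> Vx n x then z i else 1)"
    have "z' \<in> S"
      using z unfolding S_def z'_def lp_feasible_def by (auto simp: Ex_def Vx_def)
    moreover have "lp_obj n w x z' = lp_obj n w x z"
      unfolding lp_obj_def z'_def by (intro sum.cong) auto
    ultimately show "lp_obj n w x y \<le> lp_obj n w x z"
      using y_min by metis
  qed
  with LP_le_lp_obj[OF feasible_S[OF \<open>y \<in> S\<close>]] feasible_S[OF \<open>y \<in> S\<close>] show ?thesis
    using antisym by blast
qed

text \<open>Extending an LP solution of G(x) by 1 on x gives an LP solution of G with objective
  Cost(x) + LP(x).\<close>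
lemma LP_empty_le_cost_plus_LP:
  assumes wf: "wf_graph n E" and x: "x \<subseteq> {..<n}"
  shows "LP n E w {} \<le> cost w x + LP n E w x"
proof -
  have "LP n E w {} - cost w x \<le> LP n E w x"
  proof (rule LP_greatest)
    fix z assume z: "lp_feasible n E x z"
    define z' where "z' = (\<lambda>i. if i \<in> x then 1 else z i)"
    have "lp_feasible n E {} z'"
      unfolding lp_feasible_def
    proof (intro conjI ballI allI impI)
      fix i assume "i \<in> Vx n {}"
      then show "0 \<le> z' i" "z' i \<le> 1"
        using z by (auto simp: z'_def lp_feasible_def Vx_def)
    next
      fix e i j assume e: "e \<in> Ex E {}" "e = {i, j}"
      then have "e \<in> E"
        by (simp add: Ex_def)
      then obtain a b where "a < n" "b < n" "e = {a, b}"
        using wf_graph_edge[OF wf] by blast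
      then have "i < n" "j < n"
        using e by (metis doubleton_eq_iff)+
      then show "1 \<le> z' i + z' j"
        using z e by (cases "e \<inter> x = {}") (auto simp: lp_feasible_def z'_def Vx_def Ex_def)
    qed
    moreover have "lp_obj n w {} z' = cost w x + lp_obj n w x z"
    proof -
      have "{..<n} = x \<union> Vx n x" "x \<inter> Vx n x = {}"
        using x by (auto simp: Vx_def)
      then have "lp_obj n w {} z' = (\<Sum>i\<in>x. real (w i) * z' i) + (\<Sum>i\<in>Vx n x. real (w i) * z' i)"
        unfolding lp_obj_def using x
        by (simp add: Vx_def sum.union_disjoint[symmetric] finite_subset)
      also have "\<dots> = cost w x + lp_obj n w x z"
        unfolding cost_def lp_obj_def z'_def by (auto simp: Vx_def intro: sum.cong)
      finally show ?thesis .
    qed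
    ultimately show "LP n E w {} - cost w x \<le> lp_obj n w x z"
      using LP_le_lp_obj[of n E "{}" z' w] by simp
  qed
  then show ?thesis by simp
qed

definition half_on_edges :: "nat set set \<Rightarrow> nat set \<Rightarrow> nat \<Rightarrow> real" where
  "half_on_edges E x i = (if incident E x i then 1/2 else 0)"

lemma lp_feasible_half_on_edges: "lp_feasible n E x (half_on_edges E x)"
  unfolding lp_feasible_def half_on_edges_def using incident_if_edge by fastforce

lemma LP_attained_vanishing_off_edges:
  "\<exists>z. lp_feasible n E x z \<and> lp_obj n w x z = LP n E w x \<and> (\<forall>i. \<not> incident E x i \<longrightarrow> z i = 0)"
proof -
  obtain y where y: "lp_feasible n E x y" "lp_obj n w x y = LP n E w x"
    using LP_attained by blast
  define z where "z = (\<lambda>i. if incident E x i then y i else 0)"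
  have "lp_feasible n E x z"
    using y(1) incident_if_edge unfolding lp_feasible_def z_def by auto
  moreover have "lp_obj n w x z \<le> lp_obj n w x y"
    unfolding lp_obj_def z_def using y(1) by (intro sum_mono) (auto simp: lp_feasible_def)
  ultimately show ?thesis
    using y(2) LP_le_lp_obj[of n E x z w] by (intro exI[of _ z]) (auto simp: z_def)
qed

lemma lp_obj_affine:
  "lp_obj n w x (\<lambda>i. h i + T * (z i - h i)) = lp_obj n w x h + T * (lp_obj n w x z - lp_obj n w x h)"
  unfolding lp_obj_def by (simp add: algebra_simps sum.distrib sum_distrib_left sum_subtractf)

lemma lp_feasible_extrapolate:
  assumes z: "lp_feasible n E x z" "\<forall>i. \<not> incident E x i \<longrightarrow> z i = 0"
    and T: "T \<ge> 1" "\<forall>i\<in>Vx n x. \<bar>T * (z i - half_on_edges E x i)\<bar> \<le> 1/2"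
  shows "lp_feasible n E x (\<lambda>i. half_on_edges E x i + T * (z i - half_on_edges E x i))"
  unfolding lp_feasible_def
proof (intro conjI ballI allI impI)
  fix i assume "i \<in> Vx n x"
  then show "0 \<le> half_on_edges E x i + T * (z i - half_on_edges E x i)"
    and "half_on_edges E x i + T * (z i - half_on_edges E x i) \<le> 1"
    using T z(2) by (cases "incident E x i"; force simp: half_on_edges_def abs_le_iff)+
next
  fix e i j assume e: "e \<in> Ex E x" "e = {i, j}"
  then have "incident E x i" "incident E x j"
    using incident_if_edge by blast+
  moreover have "0 \<le> T * (z i + z j - 1)"
    using z(1) e T(1) by (auto simp: lp_feasible_def)
  ultimately show "1 \<le> half_on_edges E x i + T * (z i - half_on_edges E x i)
      + (half_on_edges E x j + T * (z j - half_on_edges E x j))"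
    by (simp add: half_on_edges_def algebra_simps)
qed

text \<open>Extrapolate from the all-1/2 solution through z until the farthest coordinate
  (at distance \<delta> from 1/2) reaches 0 or 1, i.e.\ by the factor 1/(2\<delta>) \<ge> 1.\<close>
lemma LP_attained_integral_on_edge:
  assumes not_half: "\<not> (\<exists>y. lp_feasible n E x y \<and> lp_obj n w x y = LP n E w x \<and>
                 (\<forall>i\<in>Vx n x. incident E x i \<longrightarrow> y i = 1/2))"
  shows "\<exists>y m. lp_feasible n E x y \<and> lp_obj n w x y = LP n E w x \<and>
           m \<in> Vx n x \<and> incident E x m \<and> (y m = 0 \<or> y m = 1)"
proof -
  define h where "h = half_on_edges E x"
  obtain z where z: "lp_feasible n E x z" "lp_obj n w x z = LP n E w x"
    and z_off: "\<forall>i. \<not> incident E x i \<longrightarrow> z i = 0"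
    using LP_attained_vanishing_off_edges by blast
  then obtain u where u: "u \<in> Vx n x" "incident E x u" "z u \<noteq> 1/2"
    using not_half by blast
  define \<delta> where "\<delta> = Max ((\<lambda>i. \<bar>z i - h i\<bar>) ` Vx n x)"
  have le_\<delta>: "\<bar>z i - h i\<bar> \<le> \<delta>" if "i \<in> Vx n x" for i
    using that finite_Vx unfolding \<delta>_def by simp
  obtain m where m: "m \<in> Vx n x" "\<bar>z m - h m\<bar> = \<delta>"
    using Max_in[of "(\<lambda>i. \<bar>z i - h i\<bar>) ` Vx n x"] finite_Vx u(1) unfolding \<delta>_def by fastforce
  have "0 < \<delta>"
    using le_\<delta>[OF u(1)] u by (simp add: h_def half_on_edges_def)
  have "\<delta> \<le> 1/2"
    using z(1) m z_off by (auto simp: h_def half_on_edges_def lp_feasible_def abs_if)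
  define T where "T = 1 / (2 * \<delta>)"
  have "T \<ge> 1" "T * \<delta> = 1/2"
    using \<open>0 < \<delta>\<close> \<open>\<delta> \<le> 1/2\<close> by (simp_all add: T_def field_simps)
  have dist_T: "\<bar>T * (z i - h i)\<bar> = T * \<bar>z i - h i\<bar>" for i
    using \<open>T \<ge> 1\<close> by (simp add: abs_mult)
  define y where "y = (\<lambda>i. h i + T * (z i - h i))"
  have "lp_feasible n E x y"
    unfolding y_def h_def
  proof (rule lp_feasible_extrapolate[OF z(1) z_off \<open>T \<ge> 1\<close>], intro ballI)
    fix i assume "i \<in> Vx n x"
    then have "T * \<bar>z i - h i\<bar> \<le> T * \<delta>"
      using le_\<delta> \<open>T \<ge> 1\<close> by (intro mult_left_mono) auto
    then show "\<bar>T * (z i - half_on_edges E x i)\<bar> \<le> 1/2"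
      using dist_T \<open>T * \<delta> = 1/2\<close> by (simp add: h_def)
  qed
  moreover have "lp_obj n w x y \<le> lp_obj n w x z"
  proof -
    have "lp_obj n w x z \<le> lp_obj n w x h"
      using z(2) LP_le_lp_obj[OF lp_feasible_half_on_edges] by (simp add: h_def)
    then have "T * (lp_obj n w x z - lp_obj n w x h) \<le> lp_obj n w x z - lp_obj n w x h"
      using mult_right_mono_neg[OF \<open>T \<ge> 1\<close>, of "lp_obj n w x z - lp_obj n w x h"] by simp
    then show ?thesis
      unfolding y_def lp_obj_affine by simp
  qed
  moreover have "incident E x m"
    using m \<open>0 < \<delta>\<close> z_off by (cases "incident E x m") (auto simp: h_def half_on_edges_def)
  moreover have "y m = 0 \<or> y m = 1"
    using dist_T[of m] m \<open>T * \<delta> = 1/2\<close> \<open>incident E x m\<close>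
    by (auto simp: y_def h_def half_on_edges_def abs_if split: if_splits)
  ultimately show ?thesis
    using z(2) LP_le_lp_obj[of n E x y w] m(1) by (intro exI[of _ y] exI[of _ m]) auto
qed

lemma lp_feasible_zero_imp_neighbour_one:
  assumes wf: "wf_graph n E" and y: "lp_feasible n E x y"
    and m: "incident E x m" "y m = 0"
  shows "\<exists>m'\<in>Vx n x. y m' = 1"
proof -
  obtain e where e: "e \<in> Ex E x" "m \<in> e"
    using m(1) by (auto simp: incident_def)
  then obtain m' where m': "e = {m, m'}" "m' < n"
    using wf_graph_edge[OF wf, of e] by (auto simp: Ex_def)
  then have "m' \<in> Vx n x"
    using e by (auto simp: Ex_def Vx_def)
  moreover have "1 \<le> y m + y m'" "y m' \<le> 1"
    using y e m' \<open>m' \<in> Vx n x\<close> by (auto simp: lp_feasible_def)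
  ultimately show ?thesis
    using m(2) by force
qed

lemma LP_attained_one_if_not_half:
  assumes wf: "wf_graph n E"
    and not_half: "\<not> (\<exists>y. lp_feasible n E x y \<and> lp_obj n w x y = LP n E w x \<and>
                 (\<forall>i\<in>Vx n x. incident E x i \<longrightarrow> y i = 1/2))"
  shows "\<exists>y v. lp_feasible n E x y \<and> lp_obj n w x y = LP n E w x \<and> v \<in> Vx n x \<and> y v = 1"
  using LP_attained_integral_on_edge[OF not_half] lp_feasible_zero_imp_neighbour_one[OF wf]
  by metis

definition LP_tight :: "nat \<Rightarrow> nat set set \<Rightarrow> (nat \<Rightarrow> nat) \<Rightarrow> nat set \<Rightarrow> bool" where
  "LP_tight n E w x \<longleftrightarrow> cost w x + LP n E w x = LP n E w {}"

lemma LP_tight_empty: "LP_tight n E w {}"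
  by (simp add: LP_tight_def cost_def)

lemma LP_tight_insert:
  assumes wf: "wf_graph n E" and x: "x \<subseteq> {..<n}" and tight: "LP_tight n E w x"
    and y: "lp_feasible n E x y" "lp_obj n w x y = LP n E w x"
    and v: "v \<in> Vx n x" "y v = 1"
  shows "LP_tight n E w (insert v x)"
proof -
  have "v \<notin> x" "v < n"
    using v by (auto simp: Vx_def)
  have "lp_feasible n E (insert v x) y"
    using y(1) unfolding lp_feasible_def by (auto simp: Vx_def Ex_def)
  moreover have "lp_obj n w (insert v x) y = lp_obj n w x y - real (w v)"
  proof -
    have "Vx n (insert v x) = Vx n x - {v}"
      by (auto simp: Vx_def)
    then show ?thesis
      using v unfolding lp_obj_def by (simp add: sum_diff1 finite_Vx)
  qed
  moreover have "cost w (insert v x) = cost w x + real (w v)"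
    using \<open>v \<notin> x\<close> x by (simp add: cost_def finite_subset)
  moreover have "LP n E w {} \<le> cost w (insert v x) + LP n E w (insert v x)"
    using \<open>v < n\<close> x by (intro LP_empty_le_cost_plus_LP[OF wf]) auto
  ultimately show ?thesis
    using LP_le_lp_obj[of n E "insert v x" y w] y(2) tight by (simp add: LP_tight_def)
qed

lemma LP_tight_extend:
  assumes wf: "wf_graph n E" and x: "x \<subseteq> {..<n}" and tight: "LP_tight n E w x"
    and not_target: "\<not> target n E w x"
  shows "\<exists>v\<in>Vx n x. LP_tight n E w (insert v x)"
proof -
  have "\<not> (\<exists>y. lp_feasible n E x y \<and> lp_obj n w x y = LP n E w x \<and>
                 (\<forall>i\<in>Vx n x. incident E x i \<longrightarrow> y i = 1/2))"
    using not_target x tight by (auto simp: target_def LP_tight_def)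
  then obtain y v where "lp_feasible n E x y" "lp_obj n w x y = LP n E w x" "v \<in> Vx n x" "y v = 1"
    using LP_attained_one_if_not_half[OF wf] by blast
  then show ?thesis
    using LP_tight_insert[OF wf x tight] by blast
qed

definition valid_pop :: "nat \<Rightarrow> nat set set \<Rightarrow> bool" where
  "valid_pop n P \<longleftrightarrow> finite P \<and> P \<noteq> {} \<and> (\<forall>x\<in>P. x \<subseteq> {..<n}) \<and>
     (\<forall>k. card {y\<in>P. card y = k} \<le> 2)"

definition progress :: "nat \<Rightarrow> nat set set \<Rightarrow> (nat \<Rightarrow> nat) \<Rightarrow> nat set set \<Rightarrow> nat" where
  "progress n E w P =
     (if \<exists>x\<in>P. LP_tight n E w x then n + 1 + Max (card ` {x\<in>P. LP_tight n E w x})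
      else n - Min (card ` P))"

lemma valid_pop_card_le:
  assumes "valid_pop n P"
  shows "card P \<le> 2 * (n + 1)"
proof -
  have "P \<subseteq> (\<Union>k\<in>{..n}. {y\<in>P. card y = k})"
    using assms card_le_if_subset_lessThan by (fastforce simp: valid_pop_def)
  then have "card P \<le> card (\<Union>k\<in>{..n}. {y\<in>P. card y = k})"
    using assms by (intro card_mono) (auto simp: valid_pop_def)
  also have "\<dots> \<le> (\<Sum>k\<in>{..n}. card {y\<in>P. card y = k})"
    by (rule card_UN_le) simp
  also have "\<dots> \<le> (\<Sum>k\<in>{..n}. 2)"
    using assms by (intro sum_mono) (auto simp: valid_pop_def)
  finally show ?thesis by simp
qed

lemma update_cases:
  assumes sel: "valid_sel sel" and "finite P"
  obtains y1 y2 where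
    "update n E w sel P x' = (insert x' P - {y\<in>insert x' P. card y = card x'}) \<union> {y1, y2}"
    "y1 \<in> insert x' P" "card y1 = card x'" "y2 \<in> insert x' P" "card y2 = card x'"
    "\<And>z. z \<in> insert x' P \<Longrightarrow> card z = card x' \<Longrightarrow>
       cost w y1 + LP n E w y1 \<le> cost w z + LP n E w z"
proof -
  define P' where "P' = {y\<in>insert x' P. card y = card x'}"
  define y1 where "y1 = sel P' (\<lambda>z. cost w z + LP n E w z)"
  define y2 where "y2 = sel P' (\<lambda>z. cost w z + 2 * LP n E w z)"
  have "finite P'" "P' \<noteq> {}"
    using \<open>finite P\<close> by (auto simp: P'_def)
  then have sel_P': "sel P' f \<in> P' \<and> (\<forall>z\<in>P'. f (sel P' f) \<le> f z)" for f
    using sel unfolding valid_sel_def by blast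
  have "y1 \<in> P'" "\<forall>z\<in>P'. cost w y1 + LP n E w y1 \<le> cost w z + LP n E w z" "y2 \<in> P'"
    using sel_P'[of "\<lambda>z. cost w z + LP n E w z"] sel_P'[of "\<lambda>z. cost w z + 2 * LP n E w z"]
    unfolding y1_def y2_def by blast+
  moreover have "update n E w sel P x' = (insert x' P - P') \<union> {y1, y2}"
    unfolding update_def Let_def P'_def y1_def y2_def ..
  ultimately show ?thesis
    using that[of y1 y2] unfolding P'_def by simp
qed

lemma update_subset: "valid_sel sel \<Longrightarrow> finite P \<Longrightarrow> update n E w sel P x' \<subseteq> insert x' P"
  by (rule update_cases[of sel P n E w x']) blast+

lemma valid_pop_update:
  assumes "valid_pop n P" "x' \<subseteq> {..<n}" "valid_sel sel"
  shows "valid_pop n (update n E w sel P x')"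
proof -
  have "finite P"
    using assms(1) by (simp add: valid_pop_def)
  obtain y1 y2 where Q:
    "update n E w sel P x' = (insert x' P - {y\<in>insert x' P. card y = card x'}) \<union> {y1, y2}"
    "y1 \<in> insert x' P" "card y1 = card x'" "y2 \<in> insert x' P" "card y2 = card x'"
    by (rule update_cases[OF assms(3) \<open>finite P\<close>, of n E w x']) (rule that)
  have "card {y \<in> update n E w sel P x'. card y = k} \<le> 2" for k
  proof (cases "k = card x'")
    case True
    then have "{y \<in> update n E w sel P x'. card y = k} \<subseteq> {y1, y2}"
      unfolding Q(1) by blast
    then have "card {y \<in> update n E w sel P x'. card y = k} \<le> card {y1, y2}"
      by (intro card_mono) auto
    also have "\<dots> \<le> 2"
      by (simp add: card_insert_le_m1)
    finally show ?thesis .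
  next
    case False
    then have "{y \<in> update n E w sel P x'. card y = k} \<subseteq> {y\<in>P. card y = k}"
      using Q(3,5) unfolding Q(1) by blast
    then have "card {y \<in> update n E w sel P x'. card y = k} \<le> card {y\<in>P. card y = k}"
      using \<open>finite P\<close> by (intro card_mono) auto
    moreover have "card {y\<in>P. card y = k} \<le> 2"
      using assms(1) by (simp add: valid_pop_def)
    ultimately show ?thesis
      by linarith
  qed
  moreover have sub: "update n E w sel P x' \<subseteq> insert x' P"
    by (rule update_subset[OF assms(3) \<open>finite P\<close>])
  then have "finite (update n E w sel P x')"
    using \<open>finite P\<close> by (meson finite_insert finite_subset)
  moreover have "update n E w sel P x' \<noteq> {}"
    unfolding Q(1) by blast
  moreover have "\<forall>z\<in>update n E w sel P x'. z \<subseteq> {..<n}"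
    using sub assms(1,2) unfolding valid_pop_def by blast
  ultimately show ?thesis
    unfolding valid_pop_def by blast
qed

lemma card_image_update:
  assumes "valid_sel sel" "finite P"
  shows "card ` update n E w sel P x' = card ` insert x' P"
proof -
  obtain y1 y2 where Q:
    "update n E w sel P x' = (insert x' P - {y\<in>insert x' P. card y = card x'}) \<union> {y1, y2}"
    "card y1 = card x'"
    by (rule update_cases[OF assms, of n E w x']) (rule that)
  show ?thesis
  proof
    show "card ` update n E w sel P x' \<subseteq> card ` insert x' P"
      using update_subset[OF assms] by blast
    show "card ` insert x' P \<subseteq> card ` update n E w sel P x'"
    proof (intro subsetI, elim imageE)
      fix k z assume z: "k = card z" "z \<in> insert x' P"
      have "y1 \<in> update n E w sel P x'"
        unfolding Q(1) by blast
      moreover have "z \<in> update n E w sel P x'" if "card z \<noteq> card x'"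
        using z(2) that unfolding Q(1) by blast
      ultimately show "k \<in> card ` update n E w sel P x'"
        using z(1) Q(2) by (cases "card z = card x'") (auto intro: rev_image_eqI)
    qed
  qed
qed

text \<open>The kept minimiser of Cost + LP of a given size lies below any tight point of that size,
  hence is tight itself.\<close>
lemma card_image_tight_update:
  assumes "valid_pop n P" "x' \<subseteq> {..<n}" "valid_sel sel" "wf_graph n E"
  shows "card ` {z \<in> update n E w sel P x'. LP_tight n E w z} = card ` {z\<in>insert x' P. LP_tight n E w z}"
proof -
  have "finite P"
    using assms(1) by (simp add: valid_pop_def)
  obtain y1 y2 where Q:
    "update n E w sel P x' = (insert x' P - {y\<in>insert x' P. card y = card x'}) \<union> {y1, y2}"
    "y1 \<in> insert x' P" "card y1 = card x'"
    and y1_min: "\<And>z. z \<in> insert x' P \<Longrightarrow> card z = card x' \<Longrightarrow>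
       cost w y1 + LP n E w y1 \<le> cost w z + LP n E w z"
    by (rule update_cases[OF assms(3) \<open>finite P\<close>, of n E w x']) (rule that)
  have "y1 \<subseteq> {..<n}"
    using Q(2) assms(1,2) by (auto simp: valid_pop_def)
  have y1_tight: "LP_tight n E w y1" if "z \<in> insert x' P" "card z = card x'" "LP_tight n E w z" for z
    using y1_min[OF that(1,2)] that(3) LP_empty_le_cost_plus_LP[OF assms(4) \<open>y1 \<subseteq> {..<n}\<close>, where w=w]
    by (simp add: LP_tight_def)
  show ?thesis
  proof
    show "card ` {z \<in> update n E w sel P x'. LP_tight n E w z} \<subseteq> card ` {z\<in>insert x' P. LP_tight n E w z}"
      using update_subset[OF assms(3) \<open>finite P\<close>] by blast
    show "card ` {z\<in>insert x' P. LP_tight n E w z} \<subseteq> card ` {z \<in> update n E w sel P x'. LP_tight n E w z}"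
    proof (intro subsetI, elim imageE CollectE conjE)
      fix k z assume z: "k = card z" "z \<in> insert x' P" "LP_tight n E w z"
      show "k \<in> card ` {z \<in> update n E w sel P x'. LP_tight n E w z}"
      proof (cases "card z = card x'")
        case True
        have "y1 \<in> update n E w sel P x'"
          unfolding Q(1) by blast
        then show ?thesis
          using y1_tight[OF z(2) True z(3)] Q(3) z(1) True by (intro rev_image_eqI[of y1]) auto
      next
        case False
        then have "z \<in> update n E w sel P x'"
          using z(2) unfolding Q(1) by blast
        then show ?thesis
          using z by (intro rev_image_eqI[of z]) auto
      qed
    qed
  qed
qed

lemma progress_update:
  assumes "valid_pop n P" "x' \<subseteq> {..<n}" "valid_sel sel" "wf_graph n E"
  shows "progress n E w (update n E w sel P x') = progress n E w (insert x' P)"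
proof -
  have "finite P"
    using assms(1) by (simp add: valid_pop_def)
  then show ?thesis
    using card_image_update[OF assms(3) \<open>finite P\<close>, of n E w x'] card_image_tight_update[OF assms]
    unfolding progress_def by (metis (no_types, lifting) empty_Collect_eq image_is_empty)
qed

lemma progress_le:
  assumes "finite P" "\<forall>x\<in>P. x \<subseteq> {..<n}"
  shows "progress n E w P \<le> 2 * n + 1"
proof -
  have "Max (card ` {x\<in>P. LP_tight n E w x}) \<le> n" if "\<exists>x\<in>P. LP_tight n E w x"
    using that assms card_le_if_subset_lessThan by (intro Max.boundedI) auto
  then show ?thesis
    by (auto simp: progress_def)
qed

lemma progress_insert_mono:
  assumes "finite P" "P \<noteq> {}"
  shows "progress n E w P \<le> progress n E w (insert x' P)"
proof (cases "\<exists>x\<in>P. LP_tight n E w x")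
  case True
  then have "Max (card ` {x\<in>P. LP_tight n E w x}) \<le> Max (card ` {x\<in>insert x' P. LP_tight n E w x})"
    using assms by (intro Max_mono) auto
  then show ?thesis
    using True by (auto simp: progress_def)
next
  case False
  have "Min (card ` insert x' P) \<le> Min (card ` P)"
    using assms by (intro Min_antimono) auto
  then show ?thesis
    using False by (auto simp: progress_def)
qed

definition flip :: "nat set \<Rightarrow> nat \<Rightarrow> nat set" where
  "flip z v = (if v \<in> z then z - {v} else insert v z)"

lemma progress_less_insert_tight:
  assumes "finite P" "LP_tight n E w x'" "\<forall>x\<in>P. LP_tight n E w x \<longrightarrow> card x < card x'"
  shows "progress n E w P < progress n E w (insert x' P)"
proof (cases "\<exists>x\<in>P. LP_tight n E w x")
  case True
  have "Max (card ` {x\<in>P. LP_tight n E w x}) < card x'"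
    using True assms(1,3) by (subst Max_less_iff) auto
  also have "\<dots> \<le> Max (card ` {x\<in>insert x' P. LP_tight n E w x})"
    using assms(1,2) by (intro Max_ge) auto
  finally show ?thesis
    using True assms(2) by (simp add: progress_def)
qed (use assms(2) in \<open>auto simp: progress_def\<close>)

lemma progress_less_insert_smaller:
  assumes "finite P" "P \<noteq> {}" "\<forall>x\<in>P. x \<subseteq> {..<n}" "\<not> (\<exists>x\<in>P. LP_tight n E w x)"
    and "\<forall>x\<in>P. card x' < card x"
  shows "progress n E w P < progress n E w (insert x' P)"
proof (cases "LP_tight n E w x'")
  case False
  have "Min (card ` P) \<in> card ` P"
    using assms(1,2) by (intro Min_in) auto
  then obtain z where z: "z \<in> P" "card z = Min (card ` P)"
    by auto
  have "card z \<le> n"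
    using assms(3) z(1) card_le_if_subset_lessThan by blast
  moreover have "Min (card ` insert x' P) \<le> card x'"
    using assms(1) by (intro Min_le) auto
  ultimately show ?thesis
    using False assms(4,5) z by (auto simp: progress_def)
qed (use assms(4) in \<open>auto simp: progress_def\<close>)

text \<open>Without a tight point, delete a vertex from a smallest point (nonempty, as 0^n is tight);
  otherwise extend a largest tight point, which is not a target.\<close>
lemma exists_flip_progress:
  assumes P: "valid_pop n P" and not_hit: "\<not> hit n E w P" and wf: "wf_graph n E"
  shows "\<exists>z\<in>P. \<exists>v<n. progress n E w P < progress n E w (insert (flip z v) P)"
proof -
  have "finite P" "P \<noteq> {}" and sub: "\<forall>x\<in>P. x \<subseteq> {..<n}"
    using P by (auto simp: valid_pop_def)
  show ?thesis
  proof (cases "\<exists>x\<in>P. LP_tight n E w x")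
    case True
    let ?T = "card ` {x\<in>P. LP_tight n E w x}"
    have "Max ?T \<in> ?T"
      using True \<open>finite P\<close> by (intro Max_in) auto
    then obtain z where z: "z \<in> P" "LP_tight n E w z" "card z = Max ?T"
      by auto
    moreover have "\<not> target n E w z"
      using not_hit z(1) by (auto simp: hit_def)
    ultimately obtain v where v: "v \<in> Vx n z" "LP_tight n E w (insert v z)"
      using LP_tight_extend[OF wf] sub by blast
    have "v \<notin> z" "v < n" "finite z"
      using v z(1) sub finite_subset by (auto simp: Vx_def)
    have "\<forall>x\<in>P. LP_tight n E w x \<longrightarrow> card x < card (insert v z)"
      using \<open>finite P\<close> \<open>v \<notin> z\<close> \<open>finite z\<close> z(3) by (auto simp: less_Suc_eq_le)
    then show ?thesis
      using progress_less_insert_tight[OF \<open>finite P\<close> v(2)] z(1) \<open>v < n\<close> \<open>v \<notin> z\<close>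
      by (metis flip_def)
  next
    case False
    have "Min (card ` P) \<in> card ` P"
      using \<open>P \<noteq> {}\<close> \<open>finite P\<close> by (intro Min_in) auto
    then obtain z where z: "z \<in> P" "card z = Min (card ` P)"
      by auto
    then obtain v where "v \<in> z"
      using False LP_tight_empty by (metis ex_in_conv)
    moreover have "finite z" "z \<subseteq> {..<n}"
      using z(1) sub finite_subset by auto
    ultimately have "card (z - {v}) < card z" "v < n"
      using card_Diff1_less[of z v] by auto
    moreover have "\<forall>x\<in>P. card z \<le> card x"
      using z(2) \<open>finite P\<close> by simp
    ultimately show ?thesis
      using progress_less_insert_smaller[OF \<open>finite P\<close> \<open>P \<noteq> {}\<close> sub False] z(1) \<open>v \<in> z\<close>
      by (metis flip_def order_less_le_trans)
  qed
qed

lemma pmf_bind_ge_mult: "pmf M a * pmf (f a) y \<le> pmf (bind_pmf M f) y"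
proof -
  have "ennreal (pmf M a * pmf (f a) y) = (\<integral>\<^sup>+x. ennreal (pmf (f a) y) * indicator {a} x \<partial>M)"
    by (simp add: nn_integral_cmult_indicator emeasure_pmf_single ennreal_mult mult.commute)
  also have "\<dots> \<le> (\<integral>\<^sup>+x. pmf (f x) y \<partial>M)"
    by (intro nn_integral_mono) (auto simp: indicator_def)
  also have "\<dots> = pmf (bind_pmf M f) y"
    by (simp add: ennreal_pmf_bind)
  finally show ?thesis
    by (simp add: ennreal_le_iff)
qed

lemma one_minus_inverse_power_ge:
  assumes "n \<ge> 1"
  shows "1/3 \<le> (1 - 1 / real n) ^ (n - 1)"
proof (cases "n = 1")
  case False
  define m where "m = n - 1"
  have "m \<ge> 1" "real n = real m + 1"
    using False assms by (auto simp: m_def)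
  have "(1 + 1 / real m) ^ m \<le> exp (1 / real m) ^ m"
    by (intro power_mono) (auto simp: add.commute)
  also have "\<dots> = exp (real m * (1 / real m))"
    by (simp only: exp_of_nat_mult)
  also have "\<dots> \<le> 3"
    using \<open>m \<ge> 1\<close> exp_le by simp
  finally have "(1 + 1 / real m) ^ m \<le> 3" .
  moreover have "(1 - 1 / real n) ^ (n - 1) = 1 / (1 + 1 / real m) ^ m"
    using \<open>m \<ge> 1\<close> \<open>real n = real m + 1\<close> by (simp add: m_def field_simps power_one_over)
  ultimately show ?thesis
    by (simp add: field_simps add_pos_nonneg)
qed simp

lemma pmf_flip_bits_flip_ge:
  assumes v: "v < n"
  shows "1 / (3 * real n) \<le> pmf (flip_bits n (\<lambda>i. 1 / real n) x) (flip x v)"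
proof -
  define M where "M = Pi_pmf {..<n} False (\<lambda>i::nat. bernoulli_pmf (1 / real n))"
  define g where "g = (\<lambda>f::nat\<Rightarrow>bool. let F = {i. f i} in (x - F) \<union> (F - x))"
  define f0 where "f0 = (\<lambda>i::nat. i = v)"
  have "n \<ge> 1"
    using v by simp
  have "pmf M f0 = (\<Prod>i\<in>{..<n}. pmf (bernoulli_pmf (1 / real n)) (f0 i))"
    unfolding M_def by (rule pmf_Pi') (auto simp: f0_def v)
  also have "\<dots> = pmf (bernoulli_pmf (1 / real n)) (f0 v) *
      (\<Prod>i\<in>{..<n} - {v}. pmf (bernoulli_pmf (1 / real n)) (f0 i))"
    using v by (subst prod.remove[of _ v]) auto
  also have "\<dots> = 1 / real n * (\<Prod>i\<in>{..<n} - {v}. 1 - 1 / real n)"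
    using \<open>n \<ge> 1\<close> by (auto simp: f0_def intro!: prod.cong)
  also have "\<dots> = 1 / real n * (1 - 1 / real n) ^ (n - 1)"
    using v by simp
  finally have "pmf M f0 = 1 / real n * (1 - 1 / real n) ^ (n - 1)" .
  moreover have "1 / (3 * real n) \<le> 1 / real n * (1 - 1 / real n) ^ (n - 1)"
    using mult_left_mono[OF one_minus_inverse_power_ge[OF \<open>n \<ge> 1\<close>], of "1 / real n"] by simp
  ultimately have "1 / (3 * real n) \<le> pmf M f0"
    by simp
  also have "\<dots> \<le> measure M (g -` {flip x v})"
    unfolding measure_pmf_single[symmetric]
    by (intro measure_pmf.finite_measure_mono) (auto simp: g_def f0_def flip_def)
  also have "\<dots> = pmf (flip_bits n (\<lambda>i. 1 / real n) x) (flip x v)"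
    by (simp add: pmf_map flip_bits_def M_def g_def)
  finally show ?thesis .
qed

lemma pmf_alt_mutation_flip_ge:
  assumes "v < n"
  shows "1 / (6 * real n) \<le> pmf (alt_mutation n E x) (flip x v)"
proof -
  have "1 / (6 * real n) = pmf (bernoulli_pmf (1/2)) False * (1 / (3 * real n))"
    by simp
  also have "\<dots> \<le> pmf (bernoulli_pmf (1/2)) False * pmf (flip_bits n (\<lambda>i. 1 / real n) x) (flip x v)"
    using pmf_flip_bits_flip_ge[OF assms] by (intro mult_left_mono) auto
  also have "\<dots> \<le> pmf (alt_mutation n E x) (flip x v)"
    unfolding alt_mutation_def by (rule order_trans[OF _ pmf_bind_ge_mult[where a=False]]) simp
  finally show ?thesis .
qed

lemma set_pmf_flip_bits_subset:
  assumes "x \<subseteq> {..<n}" "x' \<in> set_pmf (flip_bits n p x)"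
  shows "x' \<subseteq> {..<n}"
proof -
  obtain f where f: "f \<in> set_pmf (Pi_pmf {..<n} False (\<lambda>i. bernoulli_pmf (p i)))"
    and x': "x' = (x - {i. f i}) \<union> ({i. f i} - x)"
    using assms(2) unfolding flip_bits_def by (auto simp: Let_def)
  have "{i. f i} \<subseteq> {..<n}"
    using set_Pi_pmf_subset[OF finite_lessThan, of n False] f by blast
  then show ?thesis
    using assms(1) x' by auto
qed

lemma set_pmf_alt_mutation_subset:
  "x \<subseteq> {..<n} \<Longrightarrow> x' \<in> set_pmf (alt_mutation n E x) \<Longrightarrow> x' \<subseteq> {..<n}"
  unfolding alt_mutation_def by (auto split: if_splits dest: set_pmf_flip_bits_subset)

lemma set_pmf_ea_step:
  assumes "valid_pop n P" "Q \<in> set_pmf (ea_step n E w sel P)"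
  shows "\<exists>x'. x' \<subseteq> {..<n} \<and> Q = update n E w sel P x'"
proof -
  have "finite P" "P \<noteq> {}"
    using assms(1) by (auto simp: valid_pop_def)
  with assms(2) obtain x x' where "x \<in> P" "x' \<in> set_pmf (alt_mutation n E x)"
    "Q = update n E w sel P x'"
    unfolding ea_step_def by auto
  moreover have "x \<subseteq> {..<n}"
    using assms(1) \<open>x \<in> P\<close> by (auto simp: valid_pop_def)
  ultimately show ?thesis
    using set_pmf_alt_mutation_subset by blast
qed

lemma pmf_ea_step_flip_ge:
  assumes P: "valid_pop n P" and z: "z \<in> P" and v: "v < n"
  shows "1 / (24 * real n ^ 2) \<le> pmf (ea_step n E w sel P) (update n E w sel P (flip z v))"
proof -
  have "finite P" "P \<noteq> {}"
    using P by (auto simp: valid_pop_def)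
  then have "card P > 0"
    by (simp add: card_gt_0_iff)
  have "card P \<le> 4 * n"
    using valid_pop_card_le[OF P] v by presburger
  then have "real (card P) \<le> 4 * real n"
    by (metis of_nat_le_iff of_nat_mult of_nat_numeral)
  then have "real (card P) * (6 * real n) \<le> 24 * real n ^ 2"
    using v by (simp add: power2_eq_square)
  then have "1 / (24 * real n ^ 2) \<le> pmf (pmf_of_set P) z * (1 / (6 * real n))"
    using \<open>card P > 0\<close> \<open>finite P\<close> \<open>P \<noteq> {}\<close> z v by (simp add: field_simps)
  also have "\<dots> \<le> pmf (pmf_of_set P) z * pmf (alt_mutation n E z) (flip z v)"
    by (intro mult_left_mono pmf_alt_mutation_flip_ge[OF v]) simp
  also have "\<dots> \<le> pmf (pmf_of_set P) z *
      pmf (alt_mutation n E z \<bind> (\<lambda>x'. return_pmf (update n E w sel P x'))) (update n E w sel P (flip z v))"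
    by (intro mult_left_mono order_trans[OF _ pmf_bind_ge_mult[where a="flip z v"]]) auto
  also have "\<dots> \<le> pmf (ea_step n E w sel P) (update n E w sel P (flip z v))"
    unfolding ea_step_def by (rule pmf_bind_ge_mult)
  finally show ?thesis .
qed

lemma suminf_emeasure_le_potential:
  fixes X :: "nat \<Rightarrow> 'a pmf" and K :: "'a \<Rightarrow> 'a pmf" and V :: "'a \<Rightarrow> ennreal"
  assumes X_Suc: "\<And>t. X (Suc t) = X t \<bind> K"
    and I_0: "set_pmf (X 0) \<subseteq> I"
    and I_K: "\<And>P. P \<in> I \<Longrightarrow> set_pmf (K P) \<subseteq> I"
    and drift: "\<And>P. P \<in> I \<Longrightarrow> (\<integral>\<^sup>+Q. V Q \<partial>K P) + indicator H P \<le> V P"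
  shows "(\<Sum>t. emeasure (measure_pmf (X t)) H) \<le> (\<integral>\<^sup>+P. V P \<partial>X 0)"
proof -
  have I_X: "set_pmf (X t) \<subseteq> I" for t
    by (induction t) (use I_0 I_K in \<open>auto simp: X_Suc\<close>)
  have partial: "(\<Sum>s<t. emeasure (measure_pmf (X s)) H) + (\<integral>\<^sup>+P. V P \<partial>X t) \<le> (\<integral>\<^sup>+P. V P \<partial>X 0)" for t
  proof (induction t)
    case 0
    then show ?case by simp
  next
    case (Suc t)
    have "emeasure (measure_pmf (X t)) H + (\<integral>\<^sup>+P. V P \<partial>X (Suc t))
        = (\<integral>\<^sup>+P. (\<integral>\<^sup>+Q. V Q \<partial>K P) + indicator H P \<partial>X t)"
      by (simp add: X_Suc nn_integral_add add.commute)
    also have "\<dots> \<le> (\<integral>\<^sup>+P. V P \<partial>X t)"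
      using I_X drift by (intro nn_integral_mono_AE AE_pmfI) blast
    finally have "(\<Sum>s<Suc t. emeasure (measure_pmf (X s)) H) + (\<integral>\<^sup>+P. V P \<partial>X (Suc t))
        \<le> (\<Sum>s<t. emeasure (measure_pmf (X s)) H) + (\<integral>\<^sup>+P. V P \<partial>X t)"
      by (simp add: add.assoc add_left_mono)
    then show ?case
      using Suc.IH by (rule order_trans)
  qed
  show ?thesis
  proof (rule suminf_le_const[OF summableI])
    fix t
    show "(\<Sum>s<t. emeasure (measure_pmf (X s)) H) \<le> (\<integral>\<^sup>+P. V P \<partial>X 0)"
      using partial[of t] by (rule order_trans[rotated]) simp
  qed
qed

lemma set_pmf_ea_step_progress:
  assumes "valid_pop n P" "Q \<in> set_pmf (ea_step n E w sel P)" "valid_sel sel" "wf_graph n E"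
  shows "valid_pop n Q \<and> progress n E w P \<le> progress n E w Q"
proof -
  obtain x' where x': "x' \<subseteq> {..<n}" "Q = update n E w sel P x'"
    using set_pmf_ea_step[OF assms(1,2)] by blast
  have "progress n E w P \<le> progress n E w (insert x' P)"
    using assms(1) by (intro progress_insert_mono) (auto simp: valid_pop_def)
  then show ?thesis
    using x' valid_pop_update[OF assms(1) x'(1) assms(3)] progress_update[OF assms(1) x'(1) assms(3,4)]
    by simp
qed

lemma ea_step_progress_prob:
  assumes P: "valid_pop n P" and not_hit: "\<not> hit n E w P" and wf: "wf_graph n E"
    and sel: "valid_sel sel"
  shows "1 / (24 * real n ^ 2) \<le> measure (ea_step n E w sel P) {Q. progress n E w P < progress n E w Q}"
proof -
  obtain z v where zv: "z \<in> P" "v < n" "progress n E w P < progress n E w (insert (flip z v) P)"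
    using exists_flip_progress[OF P not_hit wf] by blast
  have "flip z v \<subseteq> {..<n}"
    using zv P by (auto simp: flip_def valid_pop_def)
  have "1 / (24 * real n ^ 2) \<le> measure (ea_step n E w sel P) {update n E w sel P (flip z v)}"
    using pmf_ea_step_flip_ge[OF P zv(1,2)] by (simp add: measure_pmf_single)
  also have "\<dots> \<le> measure (ea_step n E w sel P) {Q. progress n E w P < progress n E w Q}"
    using zv(3) progress_update[OF P \<open>flip z v \<subseteq> {..<n}\<close> sel wf]
    by (intro measure_pmf.finite_measure_mono) auto
  finally show ?thesis .
qed

definition hitting_potential :: "nat \<Rightarrow> nat set set \<Rightarrow> (nat \<Rightarrow> nat) \<Rightarrow> nat set set \<Rightarrow> real" where
  "hitting_potential n E w P =
     (if hit n E w P then 0 else 24 * real n ^ 2 * real (2 * n + 2 - progress n E w P))"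

lemma hitting_potential_ea_step_le:
  assumes P: "valid_pop n P" and not_hit: "\<not> hit n E w P"
    and Q: "Q \<in> set_pmf (ea_step n E w sel P)" and sel: "valid_sel sel" and wf: "wf_graph n E"
  shows "hitting_potential n E w Q + 24 * real n ^ 2 * indicator {Q. progress n E w P < progress n E w Q} Q
           \<le> hitting_potential n E w P"
proof -
  define D where "D = 24 * real n ^ 2"
  define A where "A = {Q. progress n E w P < progress n E w Q}"
  have "valid_pop n Q" "progress n E w P \<le> progress n E w Q"
    using set_pmf_ea_step_progress[OF P Q sel wf] by auto
  moreover from this(1) have "progress n E w Q \<le> 2 * n + 1"
    by (intro progress_le) (auto simp: valid_pop_def)
  ultimately have "(if hit n E w Q then 0 else real (2 * n + 2 - progress n E w Q))
      + (if Q \<in> A then 1 else 0) \<le> real (2 * n + 2 - progress n E w P)"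
    by (auto simp: A_def of_nat_diff)
  then have "D * ((if hit n E w Q then 0 else real (2 * n + 2 - progress n E w Q))
      + (if Q \<in> A then 1 else 0)) \<le> D * real (2 * n + 2 - progress n E w P)"
    by (intro mult_left_mono) (auto simp: D_def)
  moreover have "hitting_potential n E w Q + D * indicator A Q
      = D * ((if hit n E w Q then 0 else real (2 * n + 2 - progress n E w Q))
        + (if Q \<in> A then 1 else 0))"
    by (simp add: hitting_potential_def D_def indicator_def algebra_simps)
  moreover have "D * real (2 * n + 2 - progress n E w P) = hitting_potential n E w P"
    using not_hit by (simp add: hitting_potential_def D_def)
  ultimately show ?thesis
    unfolding A_def D_def by simp
qed

lemma ea_step_potential_drift:
  assumes P: "valid_pop n P" and not_hit: "\<not> hit n E w P" and n: "n \<ge> 1"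
    and wf: "wf_graph n E" and sel: "valid_sel sel"
  shows "(\<integral>\<^sup>+Q. ennreal (hitting_potential n E w Q) \<partial>ea_step n E w sel P) + 1
           \<le> ennreal (hitting_potential n E w P)"
proof -
  define D where "D = 24 * real n ^ 2"
  define A where "A = {Q. progress n E w P < progress n E w Q}"
  have "D > 0"
    using n by (simp add: D_def)
  have pointwise: "ennreal (hitting_potential n E w Q) + ennreal D * indicator A Q
      \<le> ennreal (hitting_potential n E w P)" if "Q \<in> set_pmf (ea_step n E w sel P)" for Q
  proof -
    have "ennreal (hitting_potential n E w Q + D * indicator A Q) \<le> ennreal (hitting_potential n E w P)"
      using hitting_potential_ea_step_le[OF P not_hit that sel wf] unfolding A_def D_def
      by (rule ennreal_leI)
    then show ?thesis
      using \<open>D > 0\<close> by (cases "Q \<in> A") (auto simp: hitting_potential_def ennreal_plus)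
  qed
  have "(\<integral>\<^sup>+Q. ennreal (hitting_potential n E w Q) \<partial>ea_step n E w sel P)
        + ennreal D * emeasure (ea_step n E w sel P) A
      = (\<integral>\<^sup>+Q. ennreal (hitting_potential n E w Q) + ennreal D * indicator A Q \<partial>ea_step n E w sel P)"
    by (simp add: nn_integral_add nn_integral_cmult_indicator)
  also have "\<dots> \<le> ennreal (hitting_potential n E w P)"
    using nn_integral_mono_AE[OF AE_pmfI[OF pointwise]] by (simp add: measure_pmf.emeasure_space_1)
  finally have "(\<integral>\<^sup>+Q. ennreal (hitting_potential n E w Q) \<partial>ea_step n E w sel P)
        + ennreal D * emeasure (ea_step n E w sel P) A \<le> ennreal (hitting_potential n E w P)" .
  moreover have "1 \<le> D * measure (ea_step n E w sel P) A"
    using ea_step_progress_prob[OF P not_hit wf sel] \<open>D > 0\<close> by (simp add: A_def D_def field_simps)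
  then have "1 \<le> ennreal D * emeasure (ea_step n E w sel P) A"
    using \<open>D > 0\<close> by (simp add: measure_pmf.emeasure_eq_measure ennreal_mult[symmetric]
        ennreal_1[symmetric] del: ennreal_1)
  ultimately show ?thesis
    by (meson add_left_mono order_trans)
qed

lemma expected_hitting_time_le:
  assumes n: "n \<ge> 1" and wf: "wf_graph n E" and sel: "valid_sel sel"
  shows "expected_hitting_time n E w sel \<le> ennreal (96 * real n ^ 3)"
proof -
  let ?V = "\<lambda>P. ennreal (hitting_potential n E w P)"
  let ?K = "\<lambda>P. if hit n E w P then return_pmf P else ea_step n E w sel P"
  have "expected_hitting_time n E w sel \<le> (\<integral>\<^sup>+P. ?V P \<partial>stopped_pop n E w sel 0)"
    unfolding expected_hitting_time_def
  proof (rule suminf_emeasure_le_potential[where K = ?K and I = "{P. valid_pop n P}"])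
    have "card {y\<in>{x}. card y = k} \<le> 2" for x :: "nat set" and k
      by (rule order_trans[OF card_mono[of "{x}"]]) auto
    moreover have "set_pmf (pmf_of_set (Pow {..<n})) = Pow {..<n}"
      by (rule set_pmf_of_set) auto
    ultimately show "set_pmf (stopped_pop n E w sel 0) \<subseteq> {P. valid_pop n P}"
      by (auto simp: valid_pop_def)
    show "set_pmf (?K P) \<subseteq> {P. valid_pop n P}" if "P \<in> {P. valid_pop n P}" for P
      using that set_pmf_ea_step_progress[OF _ _ sel wf] by auto
    show "(\<integral>\<^sup>+Q. ?V Q \<partial>?K P) + indicator {P. \<not> hit n E w P} P \<le> ?V P"
      if "P \<in> {P. valid_pop n P}" for P
      using that ea_step_potential_drift[OF _ _ n wf sel] by auto
  qed simp
  also have "\<dots> \<le> (\<integral>\<^sup>+P. ennreal (24 * real n ^ 2 * real (2 * n + 2)) \<partial>stopped_pop n E w sel 0)"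
    by (intro nn_integral_mono ennreal_leI) (auto simp: hitting_potential_def intro!: mult_left_mono)
  also have "\<dots> \<le> ennreal (96 * real n ^ 3)"
    using n by (simp add: measure_pmf.emeasure_space_1 power2_eq_square power3_eq_cube)
  finally show ?thesis .
qed

theorem lemma10:
  "\<exists>C::real. C > 0 \<and>
     (\<forall>n E w sel. n \<ge> 1 \<longrightarrow> wf_graph n E \<longrightarrow> (\<forall>i<n. w i > 0) \<longrightarrow> valid_sel sel \<longrightarrow>
        expected_hitting_time n E w sel \<le> ennreal (C * real n ^ 3))"
  using expected_hitting_time_le by (intro exI[of _ 96]) auto

end
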